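(* Consider the mixed support-set model described in the context, and let $\mathsf p,\mathsf q_1,\dots,\mathsf q_h,\mathsf r_1,\dots,\mathsf r_m$ be $1+h+m$ distinct sensors. Then (whenever the conditioning event has positive probability) $\Pr\Big(i\in\mathcal T_{\mathsf p}\ \Big|\ i\in\hat{\mathcal T}_{\mathsf p},\ i\in\bigcap_{l=1}^{h}\hat{\mathcal T}_{\mathsf q_l},\ i\in\bigcap_{l=1}^{m}\hat{\mathcal T}_{\mathsf r_l}^{\complement}\Big)$ equals, writing $\phi=\frac{T}{N-T}\epsilon$, $$\frac{(1-\epsilon)^{h+1}\epsilon^{m}\frac{J}{N}+(1-\epsilon)\phi^{h}(1-\phi)^{m}\frac{I}{N}}{(1-\epsilon)^{h+1}\epsilon^{m}\frac{J}{N}+(h+1)(1-\epsilon)\phi^{h}(1-\phi)^{m}\frac{I}{N}+m\,\epsilon\,\phi^{h+1}(1-\phi)^{m-1}\frac{I}{N}+\phi^{h+1}(1-\phi)^{m}\frac{N-J-(m+h+1)I}{N}}.$$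
   Context: Let $N>T\ge1$ be integers and $\Omega=\{1,\dots,N\}$; complements are taken in $\Omega$. A finite set $\mathcal L$ of sensors is given. Mixed support-set model: there are a fixed set $\mathcal J\subseteq\Omega$ with $|\mathcal J|=J$ and, for each sensor $\mathsf p\in\mathcal L$, a fixed set $\mathcal I_{\mathsf p}\subseteq\Omega$ with $|\mathcal I_{\mathsf p}|=I$, such that $\mathcal I_{\mathsf p}\cap\mathcal J=\emptyset$ for all $\mathsf p$, $\mathcal I_{\mathsf p}\cap\mathcal I_{\mathsf q}=\emptyset$ for $\mathsf p\ne\mathsf q$, and the true support set of sensor $\mathsf p$ is $\mathcal T_{\mathsf p}=\mathcal I_{\mathsf p}\cup\mathcal J$; thus $T=I+J$. Each sensor has a random estimated support set $\hat{\mathcal T}_{\mathsf p}\subseteq\Omega$. A random index $i$ is uniformly distributed on $\Omega$ and independent of all estimates. System model: there is $\epsilon$ with $0\le\epsilon\le (N-T)/N$, common to all sensors, such that for every sensor $\mathsf p$ and every $j\in\Omega$, $\Pr(j\in\hat{\mathcal T}_{\mathsf p})=1-\epsilon$ if $j\in\mathcal T_{\mathsf p}$ and $\Pr(j\in\hat{\mathcal T}_{\mathsf p})=\frac{T}{N-T}\epsilon$ if $j\notin\mathcal T_{\mathsf p}$ (so $\Pr(i\in\hat{\mathcal T}_{\mathsf p})=T/N$, detection probability $1-\epsilon$, miss probability $\epsilon$, false-alarm probability $\frac{T}{N-T}\epsilon$). For each fixed $j\in\Omega$, the events $\{j\in\hat{\mathcal T}_{\mathsf p}\}$, $\mathsf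 p\in\mathcal L$, are mutually independent. Convention: $0^0=1$ and a term with coefficient $0$ is $0$. *)

theory Defs
  imports "HOL-Probability.Probability"
begin

end

theory Submission
  imports Defs "HOL-Probability.Probability"
begin

(*
  Condition on the value j of the random index.  Since the index is independent of the
  estimates, P(i = j and the membership pattern holds at i) = P(pattern holds at j) / N, and
  by the independence of the sensors at a fixed j the latter is a product of marginals.  Each
  marginal only depends on whether j lies in the common part J, in the individual part I_s of
  exactly one sensor s, or in no true support set; summing the products class by class gives
  numerator (j ranging over T_p) and denominator (j ranging over all of Omega).
*)

lemma sets_Collect_count_space_rv:
  assumes "X \<in> measurable M (count_space S)"
  shows "{\<omega>\<in>space M. P (X \<omega>)} \<in> sets M"
proof -
  have "{\<omega>\<in>space M. P (X \<omega>)} = X -` {x\<in>S. P x} \<inter> space M"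
    using measurable_space[OF assms] by auto
  moreover have "X -` {x\<in>S. P x} \<inter> space M \<in> sets M"
    by (rule measurable_sets[OF assms]) auto
  ultimately show ?thesis by simp
qed

lemma (in prob_space) prob_indep_events_in_notin:
  assumes indep: "indep_events E L" and "finite L" and "A \<subseteq> L" "B \<subseteq> L" "A \<inter> B = {}"
  shows "prob {\<omega>\<in>space M. (\<forall>s\<in>A. \<omega> \<in> E s) \<and> (\<forall>s\<in>B. \<omega> \<notin> E s)}
      = (\<Prod>s\<in>A. prob (E s)) * (\<Prod>s\<in>B. 1 - prob (E s))"
proof -
  have events: "E s \<in> events" if "s \<in> L" for s using indep that by (auto simp: indep_events_def)
  have "finite B" using assms finite_subset by blast
  then show ?thesis using assms(3-5)
  proof (induction B arbitrary: A rule: finite_induct)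
    case empty
    then have "finite A" using \<open>finite L\<close> finite_subset by blast
    show ?case
    proof (cases "A = {}")
      case True then show ?thesis by (simp add: prob_space)
    next
      case False
      have "E s \<subseteq> space M" if "s \<in> A" for s
        using empty.prems that by (intro sets.sets_into_space events) auto
      then have "{\<omega>\<in>space M. \<forall>s\<in>A. \<omega> \<in> E s} = (\<Inter>s\<in>A. E s)"
        using False by auto
      moreover have "prob (\<Inter>s\<in>A. E s) = (\<Prod>s\<in>A. prob (E s))"
        using indep False \<open>finite A\<close> empty.prems unfolding indep_events_def by blast
      ultimately show ?thesis by simp
    qed
  next
    case (insert b B)
    let ?X = "\<lambda>A. {\<omega>\<in>space M. (\<forall>s\<in>A. \<omega> \<in> E s) \<and> (\<forall>s\<in>B. \<omega> \<notin> E s)}"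
    have "finite A" using insert.prems \<open>finite L\<close> finite_subset by blast
    then have "?X A \<in> events" using insert events \<open>finite L\<close>
      by (intro sets.sets_Collect_conj sets.sets_Collect_finite_All sets.sets_Collect_neg) auto
    moreover have "E b \<in> events" using insert.prems events by auto
    ultimately have "prob (?X A - E b) = prob (?X A) - prob (?X A \<inter> E b)"
      by (rule finite_measure_Diff')
    moreover have "?X A - E b = {\<omega>\<in>space M. (\<forall>s\<in>A. \<omega> \<in> E s) \<and> (\<forall>s\<in>insert b B. \<omega> \<notin> E s)}"
      and "?X A \<inter> E b = ?X (insert b A)" by auto
    moreover have "prob (?X A) = (\<Prod>s\<in>A. prob (E s)) * (\<Prod>s\<in>B. 1 - prob (E s))"
      using insert.prems by (intro insert.IH) auto
    moreover have "prob (?X (insert b A)) = (\<Prod>s\<in>insert b A. prob (E s)) * (\<Prod>s\<in>B. 1 - prob (E s))"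
      using insert.prems insert.hyps by (intro insert.IH) auto
    moreover have "b \<notin> A" using insert.prems by auto
    ultimately show ?case using insert.hyps \<open>finite A\<close> by (simp add: algebra_simps)
  qed
qed

lemma (in prob_space) prob_Int_UN_of_indep:
  assumes "finite F" "disjoint_family_on B F" "A \<in> events" "B ` F \<subseteq> events"
    and indep: "\<And>f. f \<in> F \<Longrightarrow> prob (A \<inter> B f) = prob A * prob (B f)"
  shows "prob (A \<inter> (\<Union>f\<in>F. B f)) = prob A * prob (\<Union>f\<in>F. B f)"
proof -
  have "prob (A \<inter> (\<Union>f\<in>F. B f)) = prob (\<Union>f\<in>F. A \<inter> B f)"
    by (metis Int_UN_distrib)
  also have "\<dots> = (\<Sum>f\<in>F. prob (A \<inter> B f))"
    using assms by (intro finite_measure_finite_Union) (auto simp: disjoint_family_on_def)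
  also have "\<dots> = prob A * (\<Sum>f\<in>F. prob (B f))" by (simp add: indep sum_distrib_left)
  also have "(\<Sum>f\<in>F. prob (B f)) = prob (\<Union>f\<in>F. B f)"
    using assms by (intro finite_measure_finite_Union[symmetric]) auto
  finally show ?thesis .
qed

lemma sum_over_classes:
  fixes g :: "'a \<Rightarrow> real"
  assumes fin: "finite U" and C: "C \<subseteq> U" and S: "finite S"
    and D: "\<And>s. s \<in> S \<Longrightarrow> D s \<subseteq> U" "\<And>s. s \<in> S \<Longrightarrow> D s \<inter> C = {}"
    and disj: "disjoint_family_on D S" and card_D: "\<And>s. s \<in> S \<Longrightarrow> card (D s) = k"
    and on_C: "\<And>j. j \<in> C \<Longrightarrow> g j = a"
    and on_D: "\<And>s j. s \<in> S \<Longrightarrow> j \<in> D s \<Longrightarrow> g j = b s"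
    and on_rest: "\<And>j. j \<in> U - C - (\<Union>s\<in>S. D s) \<Longrightarrow> g j = c"
  shows "(\<Sum>j\<in>U. g j) = real (card C) * a + real k * (\<Sum>s\<in>S. b s)
           + (real (card U) - real (card C) - real (card S) * real k) * c"
proof -
  define DS where "DS = (\<Union>s\<in>S. D s)"
  define R where "R = U - C - DS"
  have fin_D: "finite (D s)" if "s \<in> S" for s using D(1)[OF that] fin finite_subset by blast
  have DS_sub: "DS \<subseteq> U" using D(1) by (auto simp: DS_def)
  then have fin_DS: "finite DS" using fin finite_subset by blast
  have split: "U = (C \<union> DS) \<union> R" and C_DS: "C \<inter> DS = {}" and CDS_R: "(C \<union> DS) \<inter> R = {}"
    using C DS_sub D(2) by (auto simp: R_def DS_def)
  have fin_C: "finite C" and fin_R: "finite R" using C fin finite_subset by (auto simp: R_def)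
  have disj': "\<forall>s\<in>S. \<forall>t\<in>S. s \<noteq> t \<longrightarrow> D s \<inter> D t = {}"
    using disj by (auto simp: disjoint_family_on_def)
  have card_DS: "card DS = card S * k"
    unfolding DS_def by (simp add: card_UN_disjoint[OF S] fin_D disj' card_D)
  have "card U = card C + card DS + card R"
    by (subst split) (simp add: card_Un_disjoint fin_C fin_DS fin_R C_DS CDS_R)
  then have card_R: "real (card R) = real (card U) - real (card C) - real (card S) * real k"
    using card_DS by simp
  have "(\<Sum>j\<in>U. g j) = (\<Sum>j\<in>C. g j) + (\<Sum>j\<in>DS. g j) + (\<Sum>j\<in>R. g j)"
    by (subst split) (simp add: sum.union_disjoint fin_C fin_DS fin_R C_DS CDS_R)
  also have "(\<Sum>j\<in>C. g j) = real (card C) * a" using on_C by simp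
  also have "(\<Sum>j\<in>DS. g j) = (\<Sum>s\<in>S. \<Sum>j\<in>D s. g j)"
    unfolding DS_def by (rule sum.UNION_disjoint[OF S]) (use fin_D disj' in auto)
  also have "\<dots> = real k * (\<Sum>s\<in>S. b s)"
    using on_D card_D by (simp add: sum_distrib_left)
  also have "(\<Sum>j\<in>R. g j) = real (card R) * c" using on_rest by (simp add: R_def DS_def)
  finally show ?thesis using card_R by simp
qed

locale sensor_estimates = prob_space M for M :: "'w measure" +
  fixes N :: nat and L :: "'s set" and That :: "'s \<Rightarrow> 'w \<Rightarrow> nat set" and idx :: "'w \<Rightarrow> nat"
  assumes finite_sensors: "finite L"
    and That_rv: "s \<in> L \<Longrightarrow> That s \<in> measurable M (count_space (Pow {1..N}))"
    and indep_estimates: "j \<in> {1..N} \<Longrightarrow> indep_events (\<lambda>s. {\<omega>\<in>space M. j \<in> That s \<omega>}) L"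
    and idx_rv: "idx \<in> measurable M (count_space {1..N})"
    and idx_uniform: "j \<in> {1..N} \<Longrightarrow> prob {\<omega>\<in>space M. idx \<omega> = j} = 1 / real N"
    and idx_indep: "j \<in> {1..N} \<Longrightarrow> f \<in> PiE L (\<lambda>_. Pow {1..N}) \<Longrightarrow>
      prob {\<omega>\<in>space M. idx \<omega> = j \<and> (\<forall>s\<in>L. That s \<omega> = f s)}
        = prob {\<omega>\<in>space M. idx \<omega> = j} * prob {\<omega>\<in>space M. \<forall>s\<in>L. That s \<omega> = f s}"
begin

definition pattern_prob :: "'s set \<Rightarrow> 's set \<Rightarrow> nat \<Rightarrow> real" where
  "pattern_prob A B j = (\<Prod>s\<in>A. prob {\<omega>\<in>space M. j \<in> That s \<omega>})
     * (\<Prod>s\<in>B. 1 - prob {\<omega>\<in>space M. j \<in> That s \<omega>})"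

lemma N_pos: "N > 0"
proof -
  obtain \<omega> where "\<omega> \<in> space M" using not_empty by blast
  then show ?thesis using measurable_space[OF idx_rv] by fastforce
qed

lemma prob_idx_indep_estimates:
  assumes j: "j \<in> {1..N}"
  shows "prob {\<omega>\<in>space M. idx \<omega> = j \<and> \<Phi> (restrict (\<lambda>s. That s \<omega>) L)}
       = prob {\<omega>\<in>space M. idx \<omega> = j} * prob {\<omega>\<in>space M. \<Phi> (restrict (\<lambda>s. That s \<omega>) L)}"
proof -
  define F where "F = {f \<in> PiE L (\<lambda>_. Pow {1..N}). \<Phi> f}"
  define atom where "atom f = {\<omega>\<in>space M. \<forall>s\<in>L. That s \<omega> = f s}" for f
  have in_atom: "\<omega> \<in> atom f \<longleftrightarrow> \<omega> \<in> space M \<and> restrict (\<lambda>s. That s \<omega>) L = f"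
    if "f \<in> PiE L (\<lambda>_. Pow {1..N})" for f \<omega>
    using that by (auto simp: atom_def PiE_iff extensional_def fun_eq_iff)
  have estimates: "restrict (\<lambda>s. That s \<omega>) L \<in> PiE L (\<lambda>_. Pow {1..N})" if "\<omega> \<in> space M" for \<omega>
    using measurable_space[OF That_rv] that by auto
  have "{\<omega>\<in>space M. \<Phi> (restrict (\<lambda>s. That s \<omega>) L)} = (\<Union>f\<in>F. atom f)"
    using in_atom estimates by (auto simp: F_def)
  moreover have "{\<omega>\<in>space M. idx \<omega> = j \<and> \<Phi> (restrict (\<lambda>s. That s \<omega>) L)}
      = {\<omega>\<in>space M. idx \<omega> = j} \<inter> {\<omega>\<in>space M. \<Phi> (restrict (\<lambda>s. That s \<omega>) L)}" by auto
  moreover have "prob ({\<omega>\<in>space M. idx \<omega> = j} \<inter> (\<Union>f\<in>F. atom f))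
      = prob {\<omega>\<in>space M. idx \<omega> = j} * prob (\<Union>f\<in>F. atom f)"
  proof (rule prob_Int_UN_of_indep)
    show "finite F" unfolding F_def using finite_sensors by (simp add: finite_PiE)
    show "disjoint_family_on atom F" using in_atom by (auto simp: F_def disjoint_family_on_def)
    show "{\<omega>\<in>space M. idx \<omega> = j} \<in> events" by (rule sets_Collect_count_space_rv[OF idx_rv])
    show "atom ` F \<subseteq> events" unfolding atom_def
      using finite_sensors sets_Collect_count_space_rv[OF That_rv] by auto
    show "prob ({\<omega>\<in>space M. idx \<omega> = j} \<inter> atom f) = prob {\<omega>\<in>space M. idx \<omega> = j} * prob (atom f)"
      if "f \<in> F" for f
    proof -
      have "{\<omega>\<in>space M. idx \<omega> = j} \<inter> atom f = {\<omega>\<in>space M. idx \<omega> = j \<and> (\<forall>s\<in>L. That s \<omega> = f s)}"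
        by (auto simp: atom_def)
      then show ?thesis using idx_indep[OF j, of f] that by (simp add: F_def atom_def)
    qed
  qed
  ultimately show ?thesis by simp
qed

lemma prob_idx_pattern:
  assumes A: "A \<subseteq> L" and B: "B \<subseteq> L" "A \<inter> B = {}" and K: "K \<subseteq> {1..N}"
  shows "prob {\<omega>\<in>space M. idx \<omega> \<in> K \<and> (\<forall>s\<in>A. idx \<omega> \<in> That s \<omega>) \<and> (\<forall>s\<in>B. idx \<omega> \<notin> That s \<omega>)}
       = (\<Sum>j\<in>K. pattern_prob A B j) / real N"
proof -
  define Pat where "Pat j = {\<omega>\<in>space M. (\<forall>s\<in>A. j \<in> That s \<omega>) \<and> (\<forall>s\<in>B. j \<notin> That s \<omega>)}" for j
  have events: "{\<omega>\<in>space M. idx \<omega> = j} \<inter> Pat j \<in> events" for j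
  proof -
    have "finite A" "finite B" using A B finite_sensors finite_subset by blast+
    moreover have "{\<omega>\<in>space M. P (That s \<omega>)} \<in> events" if "s \<in> L" for s P
      using That_rv[OF that] by (rule sets_Collect_count_space_rv)
    ultimately show ?thesis unfolding Pat_def using A B
      by (intro sets.Int sets_Collect_count_space_rv[OF idx_rv] sets.sets_Collect_conj
          sets.sets_Collect_finite_All sets.sets_Collect_neg) auto
  qed
  have slice: "prob ({\<omega>\<in>space M. idx \<omega> = j} \<inter> Pat j) = pattern_prob A B j / real N"
    if j: "j \<in> {1..N}" for j
  proof -
    define \<Phi> where "\<Phi> f \<longleftrightarrow> (\<forall>s\<in>A. j \<in> f s) \<and> (\<forall>s\<in>B. j \<notin> f s)" for f :: "'s \<Rightarrow> nat set"
    have pat: "Pat j = {\<omega>\<in>space M. \<Phi> (restrict (\<lambda>s. That s \<omega>) L)}"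
      using A B by (auto simp: Pat_def \<Phi>_def)
    have idx_slice: "{\<omega>\<in>space M. idx \<omega> = j} \<inter> {\<omega>\<in>space M. \<Phi> (restrict (\<lambda>s. That s \<omega>) L)}
        = {\<omega>\<in>space M. idx \<omega> = j \<and> \<Phi> (restrict (\<lambda>s. That s \<omega>) L)}"
      by auto
    have "prob ({\<omega>\<in>space M. idx \<omega> = j} \<inter> Pat j) = prob {\<omega>\<in>space M. idx \<omega> = j} * prob (Pat j)"
      unfolding pat idx_slice by (rule prob_idx_indep_estimates[OF j])
    moreover have "Pat j = {\<omega>\<in>space M. (\<forall>s\<in>A. \<omega> \<in> {\<omega>\<in>space M. j \<in> That s \<omega>})
        \<and> (\<forall>s\<in>B. \<omega> \<notin> {\<omega>\<in>space M. j \<in> That s \<omega>})}"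
      by (auto simp: Pat_def)
    then have "prob (Pat j) = pattern_prob A B j"
      unfolding pattern_prob_def
      using prob_indep_events_in_notin[OF indep_estimates[OF j] finite_sensors A B] by simp
    ultimately show ?thesis using idx_uniform[OF j] by simp
  qed
  have "{\<omega>\<in>space M. idx \<omega> \<in> K \<and> (\<forall>s\<in>A. idx \<omega> \<in> That s \<omega>) \<and> (\<forall>s\<in>B. idx \<omega> \<notin> That s \<omega>)}
      = (\<Union>j\<in>K. {\<omega>\<in>space M. idx \<omega> = j} \<inter> Pat j)"
    by (auto simp: Pat_def)
  moreover have "prob (\<Union>j\<in>K. {\<omega>\<in>space M. idx \<omega> = j} \<inter> Pat j)
      = (\<Sum>j\<in>K. prob ({\<omega>\<in>space M. idx \<omega> = j} \<inter> Pat j))"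
    using K finite_subset events
    by (intro finite_measure_finite_Union) (auto simp: disjoint_family_on_def)
  moreover have "\<dots> = (\<Sum>j\<in>K. pattern_prob A B j) / real N"
    using K slice by (simp add: sum_divide_distrib subset_iff)
  ultimately show ?thesis by simp
qed

lemma cond_prob_idx_pattern:
  assumes "A \<subseteq> L" "B \<subseteq> L" "A \<inter> B = {}" "K \<subseteq> {1..N}"
  shows "cond_prob M (\<lambda>\<omega>. idx \<omega> \<in> K) (\<lambda>\<omega>. (\<forall>s\<in>A. idx \<omega> \<in> That s \<omega>) \<and> (\<forall>s\<in>B. idx \<omega> \<notin> That s \<omega>))
       = (\<Sum>j\<in>K. pattern_prob A B j) / (\<Sum>j\<in>{1..N}. pattern_prob A B j)"
proof -
  have "{\<omega>\<in>space M. (\<forall>s\<in>A. idx \<omega> \<in> That s \<omega>) \<and> (\<forall>s\<in>B. idx \<omega> \<notin> That s \<omega>)}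
      = {\<omega>\<in>space M. idx \<omega> \<in> {1..N} \<and> (\<forall>s\<in>A. idx \<omega> \<in> That s \<omega>) \<and> (\<forall>s\<in>B. idx \<omega> \<notin> That s \<omega>)}"
    using measurable_space[OF idx_rv] by auto
  then show ?thesis
    using prob_idx_pattern[OF assms] prob_idx_pattern[OF assms(1-3) order_refl] N_pos
    by (simp add: cond_prob_def)
qed

end

(* \<phi> is the false-alarm probability T \<epsilon> / (N - T) of the paper; its value plays no role. *)
locale mixed_support_model = sensor_estimates M N L That idx
  for M :: "'w measure" and N L and That :: "'s \<Rightarrow> 'w \<Rightarrow> nat set" and idx +
  fixes Jset :: "nat set" and Iset :: "'s \<Rightarrow> nat set" and Inum :: nat and \<epsilon> \<phi> :: real
  assumes Jset_sub: "Jset \<subseteq> {1..N}"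
    and Iset_sub: "s \<in> L \<Longrightarrow> Iset s \<subseteq> {1..N}"
    and card_Iset: "s \<in> L \<Longrightarrow> card (Iset s) = Inum"
    and Iset_Jset_disjoint: "s \<in> L \<Longrightarrow> Iset s \<inter> Jset = {}"
    and Iset_disjoint: "disjoint_family_on Iset L"
    and marginal: "s \<in> L \<Longrightarrow> j \<in> {1..N} \<Longrightarrow>
      prob {\<omega>\<in>space M. j \<in> That s \<omega>} = (if j \<in> Iset s \<union> Jset then 1 - \<epsilon> else \<phi>)"
begin

lemma pattern_prob_Jset:
  assumes "A \<subseteq> L" "B \<subseteq> L" "j \<in> Jset"
  shows "pattern_prob A B j = (1 - \<epsilon>) ^ card A * \<epsilon> ^ card B"
  using assms Jset_sub by (auto simp: pattern_prob_def marginal subset_iff)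

lemma pattern_prob_Iset:
  assumes A: "A \<subseteq> L" and B: "B \<subseteq> L" and s0: "s0 \<in> L" "j \<in> Iset s0"
  shows "pattern_prob A B j
    = (if s0 \<in> A then (1 - \<epsilon>) * \<phi> ^ (card A - 1) else \<phi> ^ card A)
      * (if s0 \<in> B then \<epsilon> * (1 - \<phi>) ^ (card B - 1) else (1 - \<phi>) ^ card B)"
proof -
  have j: "j \<in> {1..N}" "j \<notin> Jset" using s0 Iset_sub[OF s0(1)] Iset_Jset_disjoint[OF s0(1)] by auto
  have "prob {\<omega>\<in>space M. j \<in> That s \<omega>} = (if s = s0 then 1 - \<epsilon> else \<phi>)" if "s \<in> L" for s
    using that s0 j disjoint_family_onD[OF Iset_disjoint, of s s0] by (auto simp: marginal[OF that j(1)])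
  then have "pattern_prob A B j = (\<Prod>s\<in>A. if s = s0 then 1 - \<epsilon> else \<phi>)
      * (\<Prod>s\<in>B. if s = s0 then \<epsilon> else 1 - \<phi>)"
    unfolding pattern_prob_def using A B by (intro arg_cong2[where f = "(*)"] prod.cong) auto
  also have "\<dots> = (if s0 \<in> A then (1 - \<epsilon>) * \<phi> ^ (card A - 1) else \<phi> ^ card A)
      * (if s0 \<in> B then \<epsilon> * (1 - \<phi>) ^ (card B - 1) else (1 - \<phi>) ^ card B)"
    using finite_subset[OF A finite_sensors] finite_subset[OF B finite_sensors]
    by (simp only: prod_gen_delta)
  finally show ?thesis .
qed

lemma pattern_prob_outside:
  assumes "A \<subseteq> L" "B \<subseteq> L" "j \<in> {1..N}" "j \<notin> Jset" "\<And>s. s \<in> A \<union> B \<Longrightarrow> j \<notin> Iset s"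
  shows "pattern_prob A B j = \<phi> ^ card A * (1 - \<phi>) ^ card B"
  using assms by (auto simp: pattern_prob_def marginal subset_iff)

lemma sum_pattern_prob_true:
  assumes A: "A \<subseteq> L" and B: "B \<subseteq> L" "A \<inter> B = {}" and p: "p \<in> A"
  shows "(\<Sum>j\<in>Iset p \<union> Jset. pattern_prob A B j)
    = real (card Jset) * ((1 - \<epsilon>) ^ card A * \<epsilon> ^ card B)
      + real Inum * ((1 - \<epsilon>) * \<phi> ^ (card A - 1) * (1 - \<phi>) ^ card B)"
proof -
  have pL: "p \<in> L" using A p by auto
  have "finite (Iset p)" "finite Jset"
    using Iset_sub[OF pL] Jset_sub finite_subset by blast+
  then have "(\<Sum>j\<in>Iset p \<union> Jset. pattern_prob A B j)
      = (\<Sum>j\<in>Iset p. pattern_prob A B j) + (\<Sum>j\<in>Jset. pattern_prob A B j)"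
    using Iset_Jset_disjoint[OF pL] by (rule sum.union_disjoint)
  also have "(\<Sum>j\<in>Iset p. pattern_prob A B j) = real Inum * ((1 - \<epsilon>) * \<phi> ^ (card A - 1) * (1 - \<phi>) ^ card B)"
    using pattern_prob_Iset[OF A B(1) pL] p B(2) card_Iset[OF pL] by auto
  also have "(\<Sum>j\<in>Jset. pattern_prob A B j) = real (card Jset) * ((1 - \<epsilon>) ^ card A * \<epsilon> ^ card B)"
    using pattern_prob_Jset[OF A B(1)] by simp
  finally show ?thesis by simp
qed

lemma sum_pattern_prob:
  assumes A: "A \<subseteq> L" and B: "B \<subseteq> L" and AB: "A \<inter> B = {}"
  shows "(\<Sum>j\<in>{1..N}. pattern_prob A B j)
    = real (card Jset) * ((1 - \<epsilon>) ^ card A * \<epsilon> ^ card B)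
      + real Inum * (real (card A) * ((1 - \<epsilon>) * \<phi> ^ (card A - 1) * (1 - \<phi>) ^ card B)
                     + real (card B) * (\<phi> ^ card A * (\<epsilon> * (1 - \<phi>) ^ (card B - 1))))
      + (real N - real (card Jset) - real (card A + card B) * real Inum) * (\<phi> ^ card A * (1 - \<phi>) ^ card B)"
proof -
  define b where "b s0 = (if s0 \<in> A then (1 - \<epsilon>) * \<phi> ^ (card A - 1) else \<phi> ^ card A)
      * (if s0 \<in> B then \<epsilon> * (1 - \<phi>) ^ (card B - 1) else (1 - \<phi>) ^ card B)" for s0
  have fin: "finite A" "finite B" using A B finite_sensors finite_subset by blast+
  have "(\<Sum>j\<in>{1..N}. pattern_prob A B j)
      = real (card Jset) * ((1 - \<epsilon>) ^ card A * \<epsilon> ^ card B) + real Inum * (\<Sum>s\<in>A \<union> B. b s)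
        + (real (card {1..N}) - real (card Jset) - real (card (A \<union> B)) * real Inum)
          * (\<phi> ^ card A * (1 - \<phi>) ^ card B)"
  proof (rule sum_over_classes)
    fix s assume s: "s \<in> A \<union> B"
    then have sL: "s \<in> L" using A B by auto
    show "Iset s \<subseteq> {1..N}" by (rule Iset_sub[OF sL])
    show "Iset s \<inter> Jset = {}" by (rule Iset_Jset_disjoint[OF sL])
    show "card (Iset s) = Inum" by (rule card_Iset[OF sL])
    show "pattern_prob A B j = b s" if "j \<in> Iset s" for j
      unfolding b_def by (rule pattern_prob_Iset[OF A B sL that])
  next
    show "disjoint_family_on Iset (A \<union> B)"
      using A B Iset_disjoint by (auto intro: disjoint_family_on_mono)
    show "pattern_prob A B j = (1 - \<epsilon>) ^ card A * \<epsilon> ^ card B" if "j \<in> Jset" for j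
      by (rule pattern_prob_Jset[OF A B that])
    show "pattern_prob A B j = \<phi> ^ card A * (1 - \<phi>) ^ card B"
      if "j \<in> {1..N} - Jset - (\<Union>s\<in>A \<union> B. Iset s)" for j
      using that by (intro pattern_prob_outside[OF A B]) auto
  qed (use fin Jset_sub in auto)
  also have "(\<Sum>s\<in>A \<union> B. b s) = (\<Sum>s\<in>A. b s) + (\<Sum>s\<in>B. b s)"
    using fin AB by (rule sum.union_disjoint)
  also have "(\<Sum>s\<in>A. b s) = (\<Sum>s\<in>A. (1 - \<epsilon>) * \<phi> ^ (card A - 1) * (1 - \<phi>) ^ card B)"
    using AB by (intro sum.cong) (auto simp: b_def)
  also have "(\<Sum>s\<in>B. b s) = (\<Sum>s\<in>B. \<phi> ^ card A * (\<epsilon> * (1 - \<phi>) ^ (card B - 1)))"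
    using AB by (intro sum.cong) (auto simp: b_def)
  also have "card (A \<union> B) = card A + card B" using fin AB by (rule card_Un_disjoint)
  finally show ?thesis by simp
qed

end

theorem proposition4:
  fixes M :: "'w measure"
    and N T Inum Jnum h m :: nat
    and L :: "'s set"
    and Jset :: "nat set" and Iset :: "'s \<Rightarrow> nat set"
    and That :: "'s \<Rightarrow> 'w \<Rightarrow> nat set"
    and idx :: "'w \<Rightarrow> nat"
    and \<epsilon> :: real
    and p :: 's and q r :: "nat \<Rightarrow> 's"
  assumes prob: "prob_space M"
    and NT: "N > T" "T \<ge> 1"
    and fin: "finite L"
    and J_sub: "Jset \<subseteq> {1..N}" and J_card: "card Jset = Jnum"
    and I_sub: "\<forall>s\<in>L. Iset s \<subseteq> {1..N}" and I_card: "\<forall>s\<in>L. card (Iset s) = Inum"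
    and IJ_disj: "\<forall>s\<in>L. Iset s \<inter> Jset = {}"
    and II_disj: "\<forall>s\<in>L. \<forall>s'\<in>L. s \<noteq> s' \<longrightarrow> Iset s \<inter> Iset s' = {}"
    and T_eq: "T = Inum + Jnum"
    and eps: "0 \<le> \<epsilon>" "\<epsilon> \<le> (real N - real T) / real N"
    and That_rv: "\<forall>s\<in>L. That s \<in> measurable M (count_space (Pow {1..N}))"
    and marg: "\<forall>s\<in>L. \<forall>j\<in>{1..N}.
        measure M {\<omega> \<in> space M. j \<in> That s \<omega>} =
          (if j \<in> Iset s \<union> Jset then 1 - \<epsilon> else real T / (real N - real T) * \<epsilon>)"
    and indep_sensors: "\<forall>j\<in>{1..N}.
        prob_space.indep_events M (\<lambda>s. {\<omega> \<in> space M. j \<in> That s \<omega>}) L"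
    and idx_rv: "idx \<in> measurable M (count_space {1..N})"
    and idx_unif: "\<forall>j\<in>{1..N}. measure M {\<omega> \<in> space M. idx \<omega> = j} = 1 / real N"
    and idx_indep: "\<forall>j\<in>{1..N}. \<forall>f\<in>PiE L (\<lambda>_. Pow {1..N}).
        measure M {\<omega> \<in> space M. idx \<omega> = j \<and> (\<forall>s\<in>L. That s \<omega> = f s)}
        = measure M {\<omega> \<in> space M. idx \<omega> = j}
          * measure M {\<omega> \<in> space M. \<forall>s\<in>L. That s \<omega> = f s}"
    and sensors: "p \<in> L" "q ` {1..h} \<subseteq> L" "r ` {1..m} \<subseteq> L"
    and distinct: "inj_on q {1..h}" "inj_on r {1..m}"
      "p \<notin> q ` {1..h}" "p \<notin> r ` {1..m}" "q ` {1..h} \<inter> r ` {1..m} = {}"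
    and pos: "measure M {\<omega> \<in> space M. idx \<omega> \<in> That p \<omega>
        \<and> (\<forall>l\<in>{1..h}. idx \<omega> \<in> That (q l) \<omega>)
        \<and> (\<forall>l\<in>{1..m}. idx \<omega> \<notin> That (r l) \<omega>)} > 0"
  shows "cond_prob M (\<lambda>\<omega>. idx \<omega> \<in> Iset p \<union> Jset)
      (\<lambda>\<omega>. idx \<omega> \<in> That p \<omega>
        \<and> (\<forall>l\<in>{1..h}. idx \<omega> \<in> That (q l) \<omega>)
        \<and> (\<forall>l\<in>{1..m}. idx \<omega> \<notin> That (r l) \<omega>))
    = (let \<phi> = real T / (real N - real T) * \<epsilon> in
        ((1 - \<epsilon>) ^ (h + 1) * \<epsilon> ^ m * (real Jnum / real N)
          + (1 - \<epsilon>) * \<phi> ^ h * (1 - \<phi>) ^ m * (real Inum / real N))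
        / ((1 - \<epsilon>) ^ (h + 1) * \<epsilon> ^ m * (real Jnum / real N)
          + real (h + 1) * (1 - \<epsilon>) * \<phi> ^ h * (1 - \<phi>) ^ m * (real Inum / real N)
          + real m * \<epsilon> * \<phi> ^ (h + 1) * (1 - \<phi>) ^ (m - 1) * (real Inum / real N)
          + \<phi> ^ (h + 1) * (1 - \<phi>) ^ m
              * ((real N - real Jnum - real (m + h + 1) * real Inum) / real N)))"
proof -
  define \<phi> where "\<phi> = real T / (real N - real T) * \<epsilon>"
  interpret mixed_support_model M N L That idx Jset Iset Inum \<epsilon> \<phi>
    by (intro mixed_support_model.intro sensor_estimates.intro sensor_estimates_axioms.intro
        mixed_support_model_axioms.intro prob)
      (use assms in \<open>auto simp: \<phi>_def disjoint_family_on_def\<close>)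
  define A where "A = insert p (q ` {1..h})"
  define B where "B = r ` {1..m}"
  have AB: "A \<subseteq> L" "B \<subseteq> L" "A \<inter> B = {}" and "p \<in> A"
    using sensors distinct by (auto simp: A_def B_def)
  have card_AB: "card A = h + 1" "card B = m"
    using distinct by (simp_all add: A_def B_def card_image)
  have pattern: "(\<lambda>\<omega>. idx \<omega> \<in> That p \<omega> \<and> (\<forall>l\<in>{1..h}. idx \<omega> \<in> That (q l) \<omega>) \<and> (\<forall>l\<in>{1..m}. idx \<omega> \<notin> That (r l) \<omega>))
      = (\<lambda>\<omega>. (\<forall>s\<in>A. idx \<omega> \<in> That s \<omega>) \<and> (\<forall>s\<in>B. idx \<omega> \<notin> That s \<omega>))"
    by (auto simp: A_def B_def)
  have true_range: "Iset p \<union> Jset \<subseteq> {1..N}" using I_sub J_sub sensors by auto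
  have numerator: "(1 - \<epsilon>) ^ (h + 1) * \<epsilon> ^ m * (real Jnum / real N)
      + (1 - \<epsilon>) * \<phi> ^ h * (1 - \<phi>) ^ m * (real Inum / real N)
    = (\<Sum>j\<in>Iset p \<union> Jset. pattern_prob A B j) / real N"
    unfolding sum_pattern_prob_true[OF AB \<open>p \<in> A\<close>] card_AB J_card
    using N_pos by (simp add: field_simps)
  have denominator: "(1 - \<epsilon>) ^ (h + 1) * \<epsilon> ^ m * (real Jnum / real N)
      + real (h + 1) * (1 - \<epsilon>) * \<phi> ^ h * (1 - \<phi>) ^ m * (real Inum / real N)
      + real m * \<epsilon> * \<phi> ^ (h + 1) * (1 - \<phi>) ^ (m - 1) * (real Inum / real N)
      + \<phi> ^ (h + 1) * (1 - \<phi>) ^ m * ((real N - real Jnum - real (m + h + 1) * real Inum) / real N)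
    = (\<Sum>j\<in>{1..N}. pattern_prob A B j) / real N"
    unfolding sum_pattern_prob[OF AB] card_AB J_card
    using N_pos by (simp add: field_simps)
  show ?thesis
    unfolding Let_def \<phi>_def[symmetric] pattern numerator denominator
      cond_prob_idx_pattern[OF AB true_range]
    using N_pos by simp
qed

end
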